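(* Let $u_1,\ldots,u_m$ be a sequence of squarefree monomials of the same degree having linear quotient order. Then any proliferation of this sequence again has linear quotient order.
   Context: A sequence $u_1,\ldots,u_m$ of monomials of the same degree has linear quotient order if the ideal $(u_1,\ldots,u_{j-1}):u_j$ is generated by variables for every $j=2,\ldots,m$. Proliferation: fix a variable $x_i$ and new variables $x_{i1},\ldots,x_{ir}$. For each $j$ with $x_i\mid u_j$ set $u_{jk}=x_{ik}(u_j/x_i)$ for $k=1,\ldots,r$ (i.e. $x_i$ replaced by $x_{ik}$). The proliferation of $u_1,\ldots,u_m$ (with respect to $x_i$ and $x_{i1},\ldots,x_{ir}$) is the sequence obtained from $u_1,\ldots,u_m$ by replacing each $u_j$ divisible by $x_i$ with the consecutive block $u_{j1},\ldots,u_{jr}$, keeping the other $u_j$ unchanged and in place. *)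

theory Defs
  imports "HOL-Library.Multiset"
begin

text \<open>Monomials in the variables of type 'v are modelled as finite multisets of
variables (exponent vector = multiplicities). Divisibility of monomials is
sub-multiset inclusion, the product is multiset sum, the degree is the size.
A monomial ideal is determined by the monomials it contains, so ideals are
represented by their sets of monomials.\<close>

definition squarefree_mon :: "'v multiset \<Rightarrow> bool" where
  "squarefree_mon u \<longleftrightarrow> (\<forall>x. count u x \<le> 1)"

definition mideal :: "'v multiset set \<Rightarrow> 'v multiset set" where
  "mideal S = {w. \<exists>s\<in>S. s \<subseteq># w}"

definition mcolon :: "'v multiset set \<Rightarrow> 'v multiset \<Rightarrow> 'v multiset set" where
  "mcolon I u = {w. w + u \<in> I}"

definition generated_by_vars :: "'v multiset set \<Rightarrow> bool" where
  "generated_by_vars I \<longleftrightarrow> (\<exists>V. I = mideal ((\<lambda>x. {#x#}) ` V))"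

text \<open>Linear quotient order of the sequence us = [u_1,...,u_m] (0-indexed here):
for every j = 2..m, (u_1,...,u_{j-1}) : u_j is generated by variables.\<close>
definition linear_quotient_order :: "'v multiset list \<Rightarrow> bool" where
  "linear_quotient_order us \<longleftrightarrow>
     (\<forall>j. 1 \<le> j \<and> j < length us \<longrightarrow>
        generated_by_vars (mcolon (mideal (set (take j us))) (us ! j)))"

definition proliferation :: "'v \<Rightarrow> 'v list \<Rightarrow> 'v multiset list \<Rightarrow> 'v multiset list" where
  "proliferation x ys us =
     concat (map (\<lambda>u. if x \<in># u then map (\<lambda>y. add_mset y (u - {#x#})) ys else [u]) us)"

end

(* The colon ideal (S) : u is generated by the monomials s - u, so it is generated by variables
   iff every s - u is divisible by a variable of the form t - u with t in S.  In the proliferation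
   the monomial u_jk is preceded by the blocks of u_1, ..., u_(j-1) and by its siblings u_jl, l < k.
   A sibling differs from u_jk only by the new variable x_il.  An element s[x := y] of an earlier
   block inherits the witness t of s as t[x := y] or t[x := x_ik]: if x divides u_j, squarefreeness
   of s forces the quotient variable v to differ from x and the replacement cancels; otherwise
   v = x is traded for y. *)

theory Submission
  imports Defs
begin

definition linear_quotient :: "'v multiset set \<Rightarrow> 'v multiset \<Rightarrow> bool" where
  "linear_quotient S u \<longleftrightarrow> (\<forall>s\<in>S. \<exists>t\<in>S. \<exists>v. v \<in># s - u \<and> t - u = {#v#})"

definition replace_var :: "'v \<Rightarrow> 'v \<Rightarrow> 'v multiset \<Rightarrow> 'v multiset" where
  "replace_var x y u = (if x \<in># u then add_mset y (u - {#x#}) else u)"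

definition proliferate_mon :: "'v \<Rightarrow> 'v list \<Rightarrow> 'v multiset \<Rightarrow> 'v multiset list" where
  "proliferate_mon x ys u = (if x \<in># u then map (\<lambda>y. add_mset y (u - {#x#})) ys else [u])"

lemma mcolon_mideal: "mcolon (mideal S) u = mideal ((\<lambda>s. s - u) ` S)"
  unfolding mcolon_def mideal_def by (auto simp: subset_eq_diff_conv add.commute)

lemma generated_by_vars_mideal_iff:
  "generated_by_vars (mideal D) \<longleftrightarrow> (\<forall>s\<in>D. \<exists>v. v \<in># s \<and> {#v#} \<in> D)"
proof
  assume "generated_by_vars (mideal D)"
  then obtain V where V: "mideal D = mideal ((\<lambda>x. {#x#}) ` V)"
    unfolding generated_by_vars_def by blast
  have "{#} \<notin> D"
  proof
    assume "{#} \<in> D"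
    then have "{#} \<in> mideal D" unfolding mideal_def by auto
    then have "{#} \<in> mideal ((\<lambda>x. {#x#}) ` V)" using V by simp
    then show False unfolding mideal_def by auto
  qed
  show "\<forall>s\<in>D. \<exists>v. v \<in># s \<and> {#v#} \<in> D"
  proof
    fix s assume "s \<in> D"
    then have "s \<in> mideal D" unfolding mideal_def by auto
    then have "s \<in> mideal ((\<lambda>x. {#x#}) ` V)" using V by simp
    then obtain v where v: "v \<in> V" "{#v#} \<subseteq># s" unfolding mideal_def by blast
    have "{#v#} \<in> mideal ((\<lambda>x. {#x#}) ` V)" using v(1) unfolding mideal_def by blast
    then have "{#v#} \<in> mideal D" using V by simp
    then obtain t where t: "t \<in> D" "t \<subseteq># {#v#}" unfolding mideal_def by blast
    have "t = {#v#}" using \<open>{#} \<notin> D\<close> t by (auto intro: nonempty_subseteq_mset_eq_single)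
    with t(1) v(2) show "\<exists>v. v \<in># s \<and> {#v#} \<in> D" by (auto simp: mset_subset_eq_single)
  qed
next
  assume H: "\<forall>s\<in>D. \<exists>v. v \<in># s \<and> {#v#} \<in> D"
  have "mideal D = mideal ((\<lambda>x. {#x#}) ` {v. {#v#} \<in> D})"
  proof (rule set_eqI, rule iffI)
    fix w assume "w \<in> mideal D"
    then obtain s where s: "s \<in> D" "s \<subseteq># w" unfolding mideal_def by auto
    then obtain v where "v \<in># s" "{#v#} \<in> D" using H by blast
    with s show "w \<in> mideal ((\<lambda>x. {#x#}) ` {v. {#v#} \<in> D})"
      unfolding mideal_def by (auto dest: mset_subset_eqD)
  next
    fix w assume "w \<in> mideal ((\<lambda>x. {#x#}) ` {v. {#v#} \<in> D})"
    then show "w \<in> mideal D" unfolding mideal_def by blast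
  qed
  then show "generated_by_vars (mideal D)" unfolding generated_by_vars_def by blast
qed

lemma generated_by_vars_mcolon_iff:
  "generated_by_vars (mcolon (mideal S) u) \<longleftrightarrow> linear_quotient S u"
  unfolding mcolon_mideal generated_by_vars_mideal_iff linear_quotient_def
  by (auto simp: image_iff eq_commute; meson)

lemma linear_quotient_order_iff:
  "linear_quotient_order L \<longleftrightarrow>
     (\<forall>as u bs. L = as @ u # bs \<longrightarrow> as \<noteq> [] \<longrightarrow> linear_quotient (set as) u)"
proof
  assume H: "linear_quotient_order L"
  show "\<forall>as u bs. L = as @ u # bs \<longrightarrow> as \<noteq> [] \<longrightarrow> linear_quotient (set as) u"
  proof (intro allI impI)
    fix as u bs assume "L = as @ u # bs" "as \<noteq> []"
    moreover from this have "1 \<le> length as" "length as < length L" by (auto simp: Suc_le_eq)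
    ultimately show "linear_quotient (set as) u"
      using H unfolding linear_quotient_order_def by (auto simp: generated_by_vars_mcolon_iff)
  qed
next
  assume H: "\<forall>as u bs. L = as @ u # bs \<longrightarrow> as \<noteq> [] \<longrightarrow> linear_quotient (set as) u"
  show "linear_quotient_order L" unfolding linear_quotient_order_def
  proof (intro allI impI)
    fix j assume j: "1 \<le> j \<and> j < length L"
    then have "L = take j L @ L ! j # drop (Suc j) L" "take j L \<noteq> []"
      by (auto simp: id_take_nth_drop)
    with H have "linear_quotient (set (take j L)) (L ! j)" by blast
    then show "generated_by_vars (mcolon (mideal (set (take j L))) (L ! j))"
      by (simp add: generated_by_vars_mcolon_iff)
  qed
qed

lemma linear_quotient_empty [simp]: "linear_quotient {} u"
  unfolding linear_quotient_def by simp

lemma concat_map_eq_append_ConsD: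
  assumes "concat (map f xs) = as @ w # bs"
  obtains xs1 z xs2 cs1 cs2 where "xs = xs1 @ z # xs2" "f z = cs1 @ w # cs2"
    "as = concat (map f xs1) @ cs1"
  using assms
proof (induction xs arbitrary: as thesis)
  case Nil then show ?case by simp
next
  case (Cons z xs)
  from Cons.prems(2) have "f z @ concat (map f xs) = as @ w # bs" by simp
  then obtain rs where
    "f z = as @ rs \<and> rs @ concat (map f xs) = w # bs \<or> f z @ rs = as \<and> concat (map f xs) = rs @ w # bs"
    unfolding append_eq_append_conv2 by blast
  then consider cs2 where "f z = as @ w # cs2"
    | rs where "f z @ rs = as" "concat (map f xs) = rs @ w # bs"
    by (metis Cons_eq_append_conv append_Nil2)
  then show ?case
  proof cases
    case 1
    then show ?thesis using Cons.prems(1)[of "[]" z xs as] by simp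
  next
    case 2
    show ?thesis
    proof (rule Cons.IH[OF _ 2(2)])
      fix xs1 z' xs2 cs1 cs2
      assume "xs = xs1 @ z' # xs2" "f z' = cs1 @ w # cs2" "rs = concat (map f xs1) @ cs1"
      then show thesis using Cons.prems(1)[of "z # xs1" z' xs2 cs1 cs2] 2(1) by simp
    qed
  qed
qed

lemma set_proliferate_mon:
  "ys \<noteq> [] \<Longrightarrow> set (proliferate_mon x ys u) = (\<lambda>y. replace_var x y u) ` set ys"
  unfolding proliferate_mon_def replace_var_def by (auto simp: image_constant_conv)

lemma proliferate_mon_eq_append_ConsD:
  assumes "proliferate_mon x ys u = cs1 @ w # cs2" "distinct ys" "ys \<noteq> []"
  obtains y where "y \<in> set ys" "w = replace_var x y u"
    "set cs1 \<subseteq> {replace_var x y' u | y'. y' \<in> set ys \<and> y' \<noteq> y \<and> x \<in># u}"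
proof (cases "x \<in># u")
  case True
  with assms(1) have "map (\<lambda>y. replace_var x y u) ys = cs1 @ w # cs2"
    unfolding proliferate_mon_def replace_var_def by simp
  then obtain ys1 y ys2 where "ys = ys1 @ y # ys2" "map (\<lambda>y. replace_var x y u) ys1 = cs1"
    "w = replace_var x y u"
    by (auto simp: map_eq_append_conv Cons_eq_map_conv)
  with True assms(2) show thesis by (intro that) auto
next
  case False
  with assms(1) have "cs1 = []" "w = u"
    unfolding proliferate_mon_def by (auto simp: Cons_eq_append_conv)
  with False assms(3) show thesis
    by (intro that[of "hd ys"]) (auto simp: replace_var_def)
qed

lemma replace_var_diff_replace_var:
  "x \<in># u \<Longrightarrow> y \<noteq> z \<Longrightarrow> y \<notin># u \<Longrightarrow> replace_var x y u - replace_var x z u = {#y#}"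
  unfolding replace_var_def by (auto simp: multiset_eq_iff not_in_iff)

lemma replace_var_diff_eq:
  assumes "x \<in># u \<or> x \<notin># t" "z \<notin># t" "z \<notin># u"
  shows "replace_var x z t - replace_var x z u = t - u"
proof (cases "x \<in># u")
  case True
  then show ?thesis
    using assms(2,3) unfolding replace_var_def by (auto simp: multiset_eq_iff Suc_le_eq not_in_iff)
next
  case False
  with assms(1) show ?thesis unfolding replace_var_def by simp
qed

lemma replace_var_colon_witness:
  assumes "squarefree_mon s" "v \<in># s - u" "t - u = {#v#}"
    and "y \<notin># s + t + u" "z \<notin># s + t + u"
  obtains y' v' where "y' \<in> {y, z}" "v' \<in># replace_var x y s - replace_var x z u"
    "replace_var x y' t - replace_var x z u = {#v'#}"
proof -
  have count_v: "count u v < count s v" using assms(2) by (simp add: in_diff_count)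
  have "v \<in># t" using assms(3) in_diffD[of v t u] by simp
  with assms(4,5) count_v have "v \<noteq> y" "v \<noteq> z" by (auto simp: not_in_iff)
  have witness_z: "replace_var x z t - replace_var x z u = {#v#}" if "x \<in># u \<or> x \<notin># t"
    using that assms(3,5) by (simp add: replace_var_diff_eq)
  show thesis
  proof (cases "x \<in># u")
    case True
    have "v \<noteq> x"
    proof
      assume "v = x"
      with count_v have "count u x < count s x" by simp
      moreover have "count s x \<le> 1" "0 < count u x"
        using assms(1) True unfolding squarefree_mon_def by auto
      ultimately show False by linarith
    qed
    with True \<open>v \<noteq> y\<close> \<open>v \<noteq> z\<close> count_v
    have "v \<in># replace_var x y s - replace_var x z u"
      by (auto simp: replace_var_def in_diff_count)
    with True witness_z show thesis by (intro that[of z v]) auto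
  next
    case False
    show thesis
    proof (cases "v = x")
      case True
      with assms(2) \<open>v \<in># t\<close> have "x \<in># s" "x \<in># t" by (auto dest: in_diffD)
      have "count (replace_var x y t - u) w = count {#y#} w" for w
        using arg_cong[OF assms(3), of "\<lambda>m. count m w"] True False \<open>x \<in># t\<close> assms(4)
        by (cases "w = x"; cases "w = y") (auto simp: replace_var_def not_in_iff)
      then have "replace_var x y t - u = {#y#}" by (simp add: multiset_eq_iff)
      moreover have "y \<in># replace_var x y s - u"
        using \<open>x \<in># s\<close> assms(4) by (simp add: replace_var_def in_diff_count not_in_iff)
      ultimately show thesis
        using False by (intro that[of y y]) (auto simp: replace_var_def)
    next
      case False
      with \<open>x \<notin># u\<close> \<open>v \<noteq> y\<close> count_v have "v \<in># replace_var x y s - replace_var x z u"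
        by (auto simp: replace_var_def in_diff_count)
      moreover have "x \<notin># t"
        using arg_cong[OF assms(3), of "\<lambda>m. count m x"] \<open>x \<notin># u\<close> False
        by (simp add: not_in_iff)
      ultimately show thesis using witness_z by (intro that[of z v]) auto
    qed
  qed
qed

lemma linear_quotient_replace_var:
  assumes "linear_quotient S u" "\<forall>s\<in>S. squarefree_mon s"
    and "\<forall>y\<in>Y. \<forall>s\<in>insert u S. y \<notin># s" "z \<in> Y"
    and "C \<subseteq> {replace_var x y u | y. y \<in> Y \<and> y \<noteq> z \<and> x \<in># u}"
  shows "linear_quotient ((\<Union>s\<in>S. (\<lambda>y. replace_var x y s) ` Y) \<union> C) (replace_var x z u)"
    (is "linear_quotient ?P ?w")
  unfolding linear_quotient_def
proof
  fix s' assume "s' \<in> ?P"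
  then consider (old) s y where "s \<in> S" "y \<in> Y" "s' = replace_var x y s"
    | (new) y where "y \<in> Y" "y \<noteq> z" "x \<in># u" "s' = replace_var x y u"
    using assms(5) by blast
  then show "\<exists>t\<in>?P. \<exists>v. v \<in># s' - ?w \<and> t - ?w = {#v#}"
  proof cases
    case old
    from assms(1) old(1) obtain t v where t: "t \<in> S" "v \<in># s - u" "t - u = {#v#}"
      unfolding linear_quotient_def by blast
    have "squarefree_mon s" "y \<notin># s + t + u" "z \<notin># s + t + u"
      using old t(1) assms(2-4) by auto
    then obtain y' v' where "y' \<in> {y, z}" "v' \<in># s' - ?w" "replace_var x y' t - ?w = {#v'#}"
      using replace_var_colon_witness[OF _ t(2,3), of y z x] old(3) by blast
    moreover have "replace_var x y' t \<in> ?P"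
      using \<open>y' \<in> {y, z}\<close> t(1) old(2) assms(4) by blast
    ultimately show ?thesis by blast
  next
    case new
    with assms(3) have "s' - ?w = {#y#}" by (simp add: replace_var_diff_replace_var)
    with \<open>s' \<in> ?P\<close> show ?thesis by auto
  qed
qed

theorem lemma5p1:
  fixes us :: "'v multiset list" and d :: nat and x :: 'v and ys :: "'v list"
  assumes "\<forall>u\<in>set us. squarefree_mon u"
    and "\<forall>u\<in>set us. size u = d"
    and "linear_quotient_order us"
    and "ys \<noteq> []"
    and "distinct ys"
    and "x \<notin> set ys"
    and "\<forall>u\<in>set us. \<forall>y\<in>set ys. y \<notin># u"
  shows "linear_quotient_order (proliferation x ys us)"
  unfolding linear_quotient_order_iff
proof (intro allI impI)
  fix as w bs
  assume "proliferation x ys us = as @ w # bs"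
  then have "concat (map (proliferate_mon x ys) us) = as @ w # bs"
    by (simp add: proliferation_def proliferate_mon_def[abs_def])
  then obtain us1 u us2 cs1 cs2 where split: "us = us1 @ u # us2"
    "proliferate_mon x ys u = cs1 @ w # cs2" "as = concat (map (proliferate_mon x ys) us1) @ cs1"
    by (rule concat_map_eq_append_ConsD)
  obtain z where z: "z \<in> set ys" "w = replace_var x z u"
    "set cs1 \<subseteq> {replace_var x y u | y. y \<in> set ys \<and> y \<noteq> z \<and> x \<in># u}"
    using proliferate_mon_eq_append_ConsD[OF split(2) assms(5,4)] by blast
  have "linear_quotient (set us1) u"
    using assms(3) split(1) unfolding linear_quotient_order_iff by (cases "us1 = []") auto
  moreover have "set as = (\<Union>s\<in>set us1. (\<lambda>y. replace_var x y s) ` set ys) \<union> set cs1"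
    using split(3) assms(4) by (simp add: set_proliferate_mon)
  ultimately show "linear_quotient (set as) w"
    using z assms(1,7) split(1) by (auto intro!: linear_quotient_replace_var)
qed

end
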